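(* Let $T_2$ be the tree with vertex set $\{w,x,y,z,u_1,a_1,b_1\}$ and edges $wx,xy,yz,zu_1,u_1a_1,u_1b_1$ (order $n=7$, maximum degree $\Delta=3$). Then $\gamma^{\rm ID}(T_2)=5=\frac23\cdot 7+\frac13 = \left(\frac{\Delta-1}{\Delta}\right)n+\frac13$.
   Context: An identifying code of a graph $G$ is a set $C\subseteq V(G)$ such that every vertex $v$ has $N[v]\cap C\neq\emptyset$ and for all distinct $u,v$, $N[u]\cap C \ne N[v]\cap C$, where $N[v]$ is the closed neighborhood; $\gamma^{\rm ID}(G)$ is its minimum size. *)

theory Defs
  imports Complex_Main
begin

text \<open>Simple graphs given by a vertex set V and a symmetric irreflexive adjacency relation E.\<close>

definition closed_nbhd :: "'a set \<Rightarrow> ('a \<Rightarrow> 'a \<Rightarrow> bool) \<Rightarrow> 'a \<Rightarrow> 'a set" where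
  "closed_nbhd V E v = {u \<in> V. u = v \<or> E v u}"

definition is_identifying_code :: "'a set \<Rightarrow> ('a \<Rightarrow> 'a \<Rightarrow> bool) \<Rightarrow> 'a set \<Rightarrow> bool" where
  "is_identifying_code V E C \<longleftrightarrow> C \<subseteq> V
     \<and> (\<forall>v\<in>V. closed_nbhd V E v \<inter> C \<noteq> {})
     \<and> (\<forall>u\<in>V. \<forall>v\<in>V. u \<noteq> v \<longrightarrow> closed_nbhd V E u \<inter> C \<noteq> closed_nbhd V E v \<inter> C)"

definition gamma_ID :: "'a set \<Rightarrow> ('a \<Rightarrow> 'a \<Rightarrow> bool) \<Rightarrow> nat" where
  "gamma_ID V E = (LEAST k. \<exists>C. is_identifying_code V E C \<and> card C = k)"

definition degree :: "'a set \<Rightarrow> ('a \<Rightarrow> 'a \<Rightarrow> bool) \<Rightarrow> 'a \<Rightarrow> nat" where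
  "degree V E v = card {u \<in> V. E v u}"

definition max_degree :: "'a set \<Rightarrow> ('a \<Rightarrow> 'a \<Rightarrow> bool) \<Rightarrow> nat" where
  "max_degree V E = Max (degree V E ` V)"

datatype T2v = w | x | y | z | u1 | a1 | b1

definition T2_edges :: "(T2v \<times> T2v) set" where
  "T2_edges = {(w,x),(x,y),(y,z),(z,u1),(u1,a1),(u1,b1)}"

definition T2_adj :: "T2v \<Rightarrow> T2v \<Rightarrow> bool" where
  "T2_adj p q \<longleftrightarrow> (p, q) \<in> T2_edges \<or> (q, p) \<in> T2_edges"

definition T2_V :: "T2v set" where
  "T2_V = {w, x, y, z, u1, a1, b1}"

end

theory Submission
  imports Defs
begin

(* Separating w from x forces y into every code. If z is in the code, then one of w, x
   dominates w, and separating a1 from b1 and dominating both leaves at least two codewords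
   among u1, a1, b1. If z is not, then separating a1 and b1 from u1 forces both leaves a1, b1,
   separating x from y forces w, and separating y from z forces one of x, u1. Either way there
   are 5 codewords, and {x, y, z, u1, a1} is a code of that size. *)

lemma gamma_ID_eqI:
  assumes "is_identifying_code V E C" and "card C = k"
    and "\<And>D. is_identifying_code V E D \<Longrightarrow> k \<le> card D"
  shows "gamma_ID V E = k"
  unfolding gamma_ID_def using assms by (intro Least_equality) blast+

lemma identifying_code_dominates:
  assumes "is_identifying_code V E C" and "v \<in> V"
  shows "\<exists>c\<in>C. c \<in> closed_nbhd V E v"
  using assms unfolding is_identifying_code_def by blast

lemma identifying_code_separates:
  assumes "is_identifying_code V E C" and "u \<in> V" and "v \<in> V" and "u \<noteq> v"
  shows "\<exists>c\<in>C. (c \<in> closed_nbhd V E u) \<noteq> (c \<in> closed_nbhd V E v)"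
  using assms unfolding is_identifying_code_def by blast

lemma T2_V_UNIV: "T2_V = UNIV"
  unfolding T2_V_def using T2v.exhaust by blast

lemma card_T2_V: "card T2_V = 7"
  by (simp add: T2_V_def)

lemma T2_closed_nbhd:
  "closed_nbhd T2_V T2_adj v =
    (case v of w \<Rightarrow> {w,x} | x \<Rightarrow> {w,x,y} | y \<Rightarrow> {x,y,z} | z \<Rightarrow> {y,z,u1}
     | u1 \<Rightarrow> {z,u1,a1,b1} | a1 \<Rightarrow> {u1,a1} | b1 \<Rightarrow> {u1,b1})"
  by (cases v) (auto simp: closed_nbhd_def T2_V_UNIV T2_adj_def T2_edges_def elim: T2v.exhaust)

lemma T2_degree:
  "degree T2_V T2_adj v =
    (case v of w \<Rightarrow> 1 | x \<Rightarrow> 2 | y \<Rightarrow> 2 | z \<Rightarrow> 2 | u1 \<Rightarrow> 3 | a1 \<Rightarrow> 1 | b1 \<Rightarrow> 1)"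
proof -
  have "{u \<in> T2_V. T2_adj v u} = closed_nbhd T2_V T2_adj v - {v}"
    by (auto simp: closed_nbhd_def T2_adj_def T2_edges_def)
  then show ?thesis
    unfolding degree_def T2_closed_nbhd by (cases v) auto
qed

lemma max_degree_T2: "max_degree T2_V T2_adj = 3"
proof -
  have "degree T2_V T2_adj ` {w, x, y, z, u1, a1, b1} = {1, 2, 3}"
    by (auto simp: T2_degree)
  then show ?thesis
    unfolding max_degree_def T2_V_def by simp
qed

lemma T2_identifying_code_card_ge:
  assumes code: "is_identifying_code T2_V T2_adj C"
  shows "5 \<le> card C"
proof -
  have "finite C"
    using code finite_subset unfolding is_identifying_code_def T2_V_def by blast
  have dom: "\<exists>c\<in>C. c \<in> closed_nbhd T2_V T2_adj v" for v
    using identifying_code_dominates[OF code] by (simp add: T2_V_UNIV)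
  have sep: "\<exists>c\<in>C. (c \<in> closed_nbhd T2_V T2_adj u) \<noteq> (c \<in> closed_nbhd T2_V T2_adj v)"
    if "u \<noteq> v" for u v
    using identifying_code_separates[OF code _ _ that] by (simp add: T2_V_UNIV)
  have "y \<in> C"
    using sep[of w x] by (auto simp: T2_closed_nbhd)
  have leaves_separated: "z \<in> C \<or> a1 \<in> C" "z \<in> C \<or> b1 \<in> C" "a1 \<in> C \<or> b1 \<in> C"
    using sep[of b1 u1] sep[of a1 u1] sep[of a1 b1] by (auto simp: T2_closed_nbhd)
  have path_separated: "w \<in> C \<or> z \<in> C" "x \<in> C \<or> u1 \<in> C"
    using sep[of x y] sep[of y z] by (auto simp: T2_closed_nbhd)
  have leaves_dominated: "w \<in> C \<or> x \<in> C" "u1 \<in> C \<or> a1 \<in> C" "u1 \<in> C \<or> b1 \<in> C"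
    using dom[of w] dom[of a1] dom[of b1] by (auto simp: T2_closed_nbhd)
  obtain S where "S \<subseteq> C" "card S = 5"
  proof (cases "z \<in> C")
    case True
    obtain p q r where "p \<in> C \<inter> {a1, b1}" "q \<in> C \<inter> {w, x}" "r \<in> C \<inter> {u1, a1, b1} - {p}"
      using leaves_separated leaves_dominated by blast
    with True \<open>y \<in> C\<close> show ?thesis
      by (intro that[of "{y, z, p, q, r}"]) auto
  next
    case False
    obtain q where "q \<in> C \<inter> {x, u1}"
      using path_separated by blast
    with False \<open>y \<in> C\<close> leaves_separated path_separated show ?thesis
      by (intro that[of "{y, a1, b1, w, q}"]) auto
  qed
  then show ?thesis
    using card_mono[OF \<open>finite C\<close>] by metis
qed

lemma T2_identifying_code_example: "is_identifying_code T2_V T2_adj {x, y, z, u1, a1}"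
  unfolding is_identifying_code_def T2_closed_nbhd
  by (simp add: T2_V_def set_eq_iff) blast

lemma gamma_ID_T2: "gamma_ID T2_V T2_adj = 5"
  by (rule gamma_ID_eqI[OF T2_identifying_code_example _ T2_identifying_code_card_ge]) simp

theorem mainTheorem6:
  shows "card T2_V = 7 \<and> max_degree T2_V T2_adj = 3
    \<and> gamma_ID T2_V T2_adj = 5
    \<and> real (gamma_ID T2_V T2_adj) = 2/3 * 7 + 1/3
    \<and> real (gamma_ID T2_V T2_adj)
        = ((real (max_degree T2_V T2_adj) - 1) / real (max_degree T2_V T2_adj)) * real (card T2_V) + 1/3"
  by (simp add: card_T2_V max_degree_T2 gamma_ID_T2)

end
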